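(* For every $w\in F(\mathcal{B})$ there exists a unique reduced computation $w=w_0\to w_1\to\dots\to w_t$ with $w_t$ the empty word, and its length satisfies $t=\|w\|$.
   Context: Let $\mathcal{A}$ be a finite non-empty alphabet, $\mathcal{A}_1=\{a_1:a\in\mathcal{A}\}$ a disjoint copy of $\mathcal{A}$, and $\mathcal{B}=\{b_1,b_2\}$; let $F=F(\mathcal{A}_1\sqcup\mathcal{B})$ be the free group, whose elements are identified with reduced words, and $F(\mathcal{B})\le F$. Let $D=4|\mathcal{A}|(|\mathcal{A}|+2)$, fix a bijection $\eta:(\mathcal{A}\sqcup\mathcal{B})\times\mathcal{A}\to\{1,\dots,D/4\}$, and for $y\in\mathcal{A}\sqcup\mathcal{B}$, $a\in\mathcal{A}$, with $k=\eta(y,a)$, put $v(y,a)=b_1^k(b_2b_1)^{D-2k}b_2^k$. For $y\in\mathcal{A}\sqcup\mathcal{B}$ let $\psi_y$ be the automorphism of $F$ fixing $b_1,b_2$ and sending $a_1\mapsto v(y,a)a_1$ for each $a\in\mathcal{A}$; let $u_y=b_i^{-1}$ if $y=b_i$ and $u_y=a_1^{-1}$ if $y=a\in\mathcal{A}$. Rules: $w\cdot\theta_y=\psi_y(w)u_y$ and $w\cdot\theta_y^{-1}=\psi_y^{-1}(wu_y^{-1})$ (freely reduced). A computation is a sequence $w_0,\dots,w_t\in F$ with $w_i=w_{i-1}\cdot\theta_{y_i}^{\varepsilon_i}$, $y_i\in\mathcal{A}\sqcup\mathcal{B}$, $\varepsilon_i\in\{\pm1\}$; its length is $t$, its history is $\theta_{y_1}^{\varepsilon_1}\cdots\theta_{y_t}^{\varepsilon_t}$,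 and it is reduced if the history is a freely reduced word; two computations from the same $w_0$ are considered equal if they have the same history. $\|w\|$ is the length of the reduced word $w$. *)

theory Defs
  imports Main
begin

(* Generators of F: G a = a_1 (a in the alphabet 'a), B1 = b_1, B2 = b_2.
   The same datatype also serves as the index set A \<squnion> B for y. *)
datatype 'a gen = G 'a | B1 | B2

(* a letter of a word: (generator, inverted?) ; True = inverse letter *)
type_synonym 'a letter = "'a gen \<times> bool"
type_synonym 'a word = "'a letter list"

definition inv_letter :: "'a letter \<Rightarrow> 'a letter" where
  "inv_letter x = (fst x, \<not> snd x)"

definition reduced_word :: "'a word \<Rightarrow> bool" where
  "reduced_word w \<longleftrightarrow> (\<forall>i. Suc i < length w \<longrightarrow> w ! Suc i \<noteq> inv_letter (w ! i))"

fun freduce :: "'a word \<Rightarrow> 'a word" where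
  "freduce [] = []"
| "freduce (x # xs) = (case freduce xs of
        [] \<Rightarrow> [x]
      | y # ys \<Rightarrow> (if y = inv_letter x then ys else x # y # ys))"

definition fmult :: "'a word \<Rightarrow> 'a word \<Rightarrow> 'a word" where
  "fmult u v = freduce (u @ v)"

definition finv :: "'a word \<Rightarrow> 'a word" where
  "finv w = rev (map inv_letter w)"

definition in_FB :: "'a word \<Rightarrow> bool" where
  "in_FB w \<longleftrightarrow> reduced_word w \<and> (\<forall>x \<in> set w. fst x \<in> {B1, B2})"

definition D_const :: "'a::finite itself \<Rightarrow> nat" where
  "D_const (t::'a itself) = 4 * card (UNIV::'a set) * (card (UNIV::'a set) + 2)"

definition vword :: "('a::finite gen \<times> 'a \<Rightarrow> nat) \<Rightarrow> 'a gen \<Rightarrow> 'a \<Rightarrow> 'a word" where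
  "vword eta y a = (let k = eta (y, a); D = D_const TYPE('a) in
     replicate k (B1, False) @ concat (replicate (D - 2 * k) [(B2, False), (B1, False)])
     @ replicate k (B2, False))"

definition hom_letter :: "('a \<Rightarrow> 'a word) \<Rightarrow> 'a letter \<Rightarrow> 'a word" where
  "hom_letter img x = (case fst x of
       G a \<Rightarrow> (if snd x then finv (img a) else img a)
     | b \<Rightarrow> [x])"

definition hom_ext :: "('a \<Rightarrow> 'a word) \<Rightarrow> 'a word \<Rightarrow> 'a word" where
  "hom_ext img w = freduce (concat (map (hom_letter img) w))"

definition psi :: "('a::finite gen \<times> 'a \<Rightarrow> nat) \<Rightarrow> 'a gen \<Rightarrow> 'a word \<Rightarrow> 'a word" where
  "psi eta y = hom_ext (\<lambda>a. vword eta y a @ [(G a, False)])"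

definition psi_inv :: "('a::finite gen \<times> 'a \<Rightarrow> nat) \<Rightarrow> 'a gen \<Rightarrow> 'a word \<Rightarrow> 'a word" where
  "psi_inv eta y = hom_ext (\<lambda>a. finv (vword eta y a) @ [(G a, False)])"

definition u_word :: "'a gen \<Rightarrow> 'a word" where
  "u_word y = [(y, True)]"

(* one rule application; eps = True means theta_y, False means theta_y^{-1} *)
definition apply_rule :: "('a::finite gen \<times> 'a \<Rightarrow> nat) \<Rightarrow> 'a word \<Rightarrow> 'a gen \<times> bool \<Rightarrow> 'a word" where
  "apply_rule eta w r = (case r of (y, eps) \<Rightarrow>
      (if eps then fmult (psi eta y w) (u_word y)
       else psi_inv eta y (fmult w (finv (u_word y)))))"

definition run :: "('a::finite gen \<times> 'a \<Rightarrow> nat) \<Rightarrow> 'a word \<Rightarrow> ('a gen \<times> bool) list \<Rightarrow> 'a word" where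
  "run eta w h = foldl (apply_rule eta) w h"

definition reduced_history :: "('a gen \<times> bool) list \<Rightarrow> bool" where
  "reduced_history h \<longleftrightarrow> (\<forall>i. Suc i < length h \<longrightarrow>
       \<not> (fst (h ! Suc i) = fst (h ! i) \<and> snd (h ! Suc i) \<noteq> snd (h ! i)))"

end

theory Submission
  imports Defs
begin

text \<open>
  A history is a word in the same letters as the words it acts on: \<open>(y, True)\<close> stands for
  \<open>\<theta>\<^sub>y\<close> and \<open>(y, False)\<close> for \<open>\<theta>\<^sub>y\<^sup>-\<^sup>1\<close>. Every \<open>\<psi>\<^sub>y\<close> fixes the words in \<open>b\<^sub>1, b\<^sub>2\<close>, on
  which the rule \<open>(b, \<epsilon>)\<close> therefore just appends the letter \<open>(b, \<epsilon>)\<close> and reduces; hence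
  the history \<open>finv w\<close> erases \<open>w\<close> letter by letter.

  Conversely, once a reduced history fails to erase the last letter of the current word, the
  word stays escaped: either its last \<open>A\<close>-letter is positive and it ends with the letter of the
  last rule, or its last \<open>A\<close>-letter is \<open>a\<^sub>1\<^sup>-\<^sup>1\<close>, followed by \<open>\<phi>\<^sub>a(g)\<^sup>-\<^sup>1 g\<close>, where
  \<open>\<phi>\<^sub>a\<close> maps \<open>b\<^sub>i\<close> to \<open>v(b\<^sub>i,a)\<^sup>-\<^sup>1\<close> and \<open>g\<close> is the word of \<open>b\<close>-rules applied since.
  This is preserved because \<open>\<psi>\<^sub>y\<close> and \<open>\<psi>\<^sub>y\<^sup>-\<^sup>1\<close> never cancel the last \<open>A\<close>-letter of a reduced
  word, and because \<open>\<phi>\<^sub>a(g) \<noteq> g\<close> for \<open>g \<noteq> 1\<close>: as the exponents \<open>\<eta>(b\<^sub>i,a)\<close> are distinct,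
  the reduced form of \<open>\<phi>\<^sub>a(g)\<close> keeps the prefix \<open>b\<^sub>1\<^sup>k b\<^sub>2\<close> or \<open>b\<^sub>2\<^sup>-\<^sup>k b\<^sub>1\<^sup>-\<^sup>1\<close> of its first
  \<open>v\<close>-word, whose sign is opposite to that of the first letter of \<open>g\<close>. An escaped word is
  not empty, so \<open>finv w\<close> is the only reduced history leading to the empty word.
\<close>

section \<open>Free reduction\<close>

lemma inv_letter_inv_letter [simp]: "inv_letter (inv_letter x) = x"
  by (simp add: inv_letter_def)

lemma inv_letter_eq_iff: "inv_letter x = y \<longleftrightarrow> x = inv_letter y"
  by auto

lemma inv_letter_Pair [simp]: "inv_letter (g, e) = (g, \<not> e)"
  and fst_inv_letter [simp]: "fst (inv_letter x) = fst x"
  and snd_inv_letter [simp]: "snd (inv_letter x) = (\<not> snd x)"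
  by (simp_all add: inv_letter_def)

lemma reduced_word_Nil [simp]: "reduced_word []"
  and reduced_word_singleton [simp]: "reduced_word [x]"
  and reduced_word_Cons_Cons [simp]:
    "reduced_word (x # y # xs) \<longleftrightarrow> y \<noteq> inv_letter x \<and> reduced_word (y # xs)"
  unfolding reduced_word_def by (auto simp: nth_Cons split: nat.splits)

lemma reduced_word_Cons:
  "reduced_word (x # xs) \<longleftrightarrow> reduced_word xs \<and> (xs = [] \<or> hd xs \<noteq> inv_letter x)"
  by (cases xs) auto

lemma reduced_word_append:
  "reduced_word (xs @ ys) \<longleftrightarrow> reduced_word xs \<and> reduced_word ys
     \<and> (xs = [] \<or> ys = [] \<or> hd ys \<noteq> inv_letter (last xs))"
  by (induction xs) (auto simp: reduced_word_Cons)

lemma reduced_word_snoc: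
  "reduced_word (xs @ [x]) \<longleftrightarrow> reduced_word xs \<and> (xs = [] \<or> last xs \<noteq> inv_letter x)"
  by (auto simp: reduced_word_append inv_letter_eq_iff)

lemma reduced_word_appendD:
  "reduced_word (xs @ ys) \<Longrightarrow> reduced_word xs"
  "reduced_word (xs @ ys) \<Longrightarrow> reduced_word ys"
  by (simp_all add: reduced_word_append)

lemma reduced_history_iff_reduced_word: "reduced_history h = reduced_word h"
  unfolding reduced_history_def reduced_word_def inv_letter_def by (auto simp: prod_eq_iff)

lemma reduced_word_freduce: "reduced_word (freduce xs)"
  by (induction xs) (auto split: list.split simp: reduced_word_Cons)

lemma freduce_reduced_word: "reduced_word xs \<Longrightarrow> freduce xs = xs"
  by (induction xs) (auto simp: reduced_word_Cons split: list.split)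

lemma freduce_idem [simp]: "freduce (freduce xs) = freduce xs"
  by (simp add: freduce_reduced_word reduced_word_freduce)

lemma freduce_Cons_inv_Cons [simp]: "freduce (x # inv_letter x # xs) = freduce xs"
  using reduced_word_freduce[of xs]
  by (auto split: list.split simp: reduced_word_Cons freduce_reduced_word)

lemma freduce_append_freduce_right [simp]: "freduce (xs @ freduce ys) = freduce (xs @ ys)"
  by (induction xs) auto

lemma freduce_append_freduce_left [simp]: "freduce (freduce xs @ ys) = freduce (xs @ ys)"
proof (induction xs)
  case (Cons x xs)
  have "freduce (freduce (x # xs) @ ys) = freduce (x # freduce xs @ ys)"
  proof (cases "freduce xs")
    case (Cons y zs)
    then show ?thesis
      using freduce_Cons_inv_Cons[of x "zs @ ys"] by auto
  qed simp
  also have "\<dots> = freduce (x # xs @ ys)"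
    using Cons.IH freduce_append_freduce_right[of "[x]"] by simp
  finally show ?case by simp
qed simp

lemma freduce_append_freduce_middle [simp]:
  "freduce (xs @ freduce ys @ zs) = freduce (xs @ ys @ zs)"
  by (metis freduce_append_freduce_left freduce_append_freduce_right)

lemma freduce_append_Cons_freduce [simp]:
  "freduce (xs @ x # freduce ys) = freduce (xs @ x # ys)"
  "freduce (xs @ x # freduce ys @ zs) = freduce (xs @ x # ys @ zs)"
  using freduce_append_freduce_right[of "xs @ [x]"] freduce_append_freduce_middle[of "xs @ [x]"]
  by simp_all

lemma finv_Nil [simp]: "finv [] = []"
  and finv_Cons [simp]: "finv (x # xs) = finv xs @ [inv_letter x]"
  and finv_append [simp]: "finv (xs @ ys) = finv ys @ finv xs"
  and finv_finv [simp]: "finv (finv xs) = xs"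
  and length_finv [simp]: "length (finv xs) = length xs"
  and finv_eq_Nil_iff [simp]: "finv xs = [] \<longleftrightarrow> xs = []"
  and finv_replicate: "finv (replicate n x) = replicate n (inv_letter x)"
  by (simp_all add: finv_def rev_map comp_def)

lemma set_finv: "set (finv xs) = inv_letter ` set xs"
  by (simp add: finv_def)

lemma reduced_word_finv [simp]: "reduced_word (finv xs) = reduced_word xs"
proof (induction xs)
  case (Cons x xs)
  have "xs \<noteq> [] \<Longrightarrow> last (finv xs) = inv_letter (hd xs)"
    by (cases xs) auto
  with Cons show ?case
    by (cases "xs = []") (auto simp: reduced_word_append reduced_word_Cons inv_letter_eq_iff)
qed simp

lemma freduce_append_finv [simp]: "freduce (xs @ finv xs @ ys) = freduce ys"
proof (induction xs arbitrary: ys)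
  case (Cons x xs)
  have "freduce ((x # xs) @ finv (x # xs) @ ys) = freduce ([x] @ xs @ finv xs @ inv_letter x # ys)"
    by simp
  also have "\<dots> = freduce ([x] @ freduce (xs @ finv xs @ inv_letter x # ys))"
    by (simp only: freduce_append_freduce_right)
  also have "\<dots> = freduce ([x] @ freduce (inv_letter x # ys))"
    by (simp only: Cons.IH)
  also have "\<dots> = freduce ys"
    by (metis freduce_append_freduce_right freduce_Cons_inv_Cons append_Cons append_Nil)
  finally show ?case .
qed simp

lemma freduce_finv_append [simp]: "freduce (finv xs @ xs @ ys) = freduce ys"
  using freduce_append_finv[of "finv xs"] by simp

lemma freduce_cancel_finv [simp]:
  "freduce (xs @ ws @ finv ws @ ys) = freduce (xs @ ys)"
  "freduce (xs @ finv ws @ ws @ ys) = freduce (xs @ ys)"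
  by (metis freduce_append_finv freduce_append_freduce_right)+

lemma freduce_finv_freduce: "freduce (finv (freduce xs) @ ys) = freduce (finv xs @ ys)"
proof -
  have "freduce (finv xs @ ys) = freduce (finv xs @ freduce xs @ finv (freduce xs) @ ys)"
    by (simp only: freduce_cancel_finv)
  also have "\<dots> = freduce (finv xs @ xs @ finv (freduce xs) @ ys)"
    by (simp only: freduce_append_freduce_middle)
  also have "\<dots> = freduce (finv (freduce xs) @ ys)"
    by (simp only: freduce_finv_append)
  finally show ?thesis by (rule sym)
qed

lemma freduce_conj_eq_Nil:
  assumes "freduce (finv v @ s @ v) = []"
  shows "freduce s = []"
proof -
  have "freduce s = freduce (v @ finv v @ s @ v @ finv v)"
    using freduce_cancel_finv(1)[of s v "[]"] by (simp only: freduce_append_finv append_Nil2)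
  also have "\<dots> = freduce (v @ freduce (finv v @ s @ v) @ finv v)"
    by (simp only: freduce_append_freduce_middle append_assoc)
  also have "\<dots> = []"
    using assms freduce_append_finv[of v "[]"] by simp
  finally show ?thesis .
qed

lemma set_freduce: "set (freduce xs) \<subseteq> set xs"
  by (induction xs) (auto split: list.split)

section \<open>Words in the letters \<open>b\<^sub>1, b\<^sub>2\<close>\<close>

definition b_word :: "'a word \<Rightarrow> bool" where
  "b_word w \<longleftrightarrow> (\<forall>x \<in> set w. fst x \<in> {B1, B2})"

lemma b_word_Nil [simp]: "b_word []"
  and b_word_Cons [simp]: "b_word (x # xs) \<longleftrightarrow> fst x \<in> {B1, B2} \<and> b_word xs"
  and b_word_append [simp]: "b_word (xs @ ys) \<longleftrightarrow> b_word xs \<and> b_word ys"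
  by (auto simp: b_word_def)

lemma b_word_finv [simp]: "b_word (finv xs) = b_word xs"
  by (auto simp: b_word_def set_finv inv_letter_def)

lemma b_word_freduce: "b_word xs \<Longrightarrow> b_word (freduce xs)"
  using set_freduce unfolding b_word_def by blast

lemma in_FB_iff: "in_FB w \<longleftrightarrow> reduced_word w \<and> b_word w"
  by (simp add: in_FB_def b_word_def)

lemma b_word_or_last_A_letter: "b_word w \<or> (\<exists>z a e s. w = z @ [(G a, e)] @ s \<and> b_word s)"
proof (induction w rule: rev_induct)
  case (snoc x w)
  show ?case
  proof (cases "fst x \<in> {B1, B2}")
    case True
    with snoc.IH show ?thesis
      by (metis append_assoc b_word_Cons b_word_Nil b_word_append)
  next
    case False
    then obtain a where "x = (G a, snd x)"
      by (metis gen.exhaust insertCI prod.collapse)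
    then show ?thesis
      by (metis append_Nil2 b_word_Nil)
  qed
qed simp

lemma reduced_word_A_letter_b_word:
  assumes "reduced_word (z @ [(G a, e)])" "reduced_word s" "b_word s"
  shows "reduced_word (z @ [(G a, e)] @ s)"
  using assms by (cases s) (auto simp: reduced_word_append)

lemma freduce_A_letter_b_word:
  assumes "reduced_word (z @ [(G a, e)])" "b_word s"
  shows "freduce (z @ [(G a, e)] @ s) = z @ [(G a, e)] @ freduce s"
proof -
  have "reduced_word (z @ [(G a, e)] @ freduce s)"
    using reduced_word_A_letter_b_word[OF assms(1) reduced_word_freduce b_word_freduce[OF assms(2)]] .
  then show ?thesis
    by (metis freduce_append_freduce_middle freduce_reduced_word append.right_neutral)
qed

lemma reduced_word_snoc_A_letter:
  assumes "reduced_word (z @ s)" "b_word s"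
    and "s = [] \<Longrightarrow> z = [] \<or> last z \<noteq> (G a, \<not> e)"
  shows "reduced_word (z @ s @ [(G a, e)])"
  unfolding append_assoc[symmetric] reduced_word_snoc
  using assms by (cases s rule: rev_cases) auto

section \<open>Automorphisms fixing \<open>b\<^sub>1, b\<^sub>2\<close>\<close>

lemma hom_ext_append: "hom_ext img (xs @ ys) = freduce (hom_ext img xs @ hom_ext img ys)"
  by (simp add: hom_ext_def)

lemma hom_ext_singleton: "hom_ext img [x] = freduce (hom_letter img x)"
  by (simp add: hom_ext_def)

lemma hom_ext_b_word: "b_word w \<Longrightarrow> hom_ext img w = freduce w"
proof -
  assume "b_word w"
  then have "concat (map (hom_letter img) w) = w"
    by (induction w) (auto simp: hom_letter_def)
  then show ?thesis
    by (simp add: hom_ext_def)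
qed

locale b_fixing_hom =
  fixes img :: "'a \<Rightarrow> 'a word" and V :: "'a \<Rightarrow> 'a word"
  assumes img_eq: "img a = V a @ [(G a, False)]"
    and b_word_V: "b_word (V a)" and reduced_word_V: "reduced_word (V a)"
begin

definition lead :: "'a \<Rightarrow> bool \<Rightarrow> 'a word" where
  "lead a e = (if e then [] else V a)"

definition trail :: "'a \<Rightarrow> bool \<Rightarrow> 'a word" where
  "trail a e = (if e then finv (V a) else [])"

lemma hom_letter_A_letter: "hom_letter img (G a, e) = lead a e @ [(G a, e)] @ trail a e"
  by (simp add: hom_letter_def img_eq lead_def trail_def)

lemma b_word_lead: "b_word (lead a e)" and b_word_trail: "b_word (trail a e)"
  and reduced_word_trail: "reduced_word (trail a e)"
  by (simp_all add: lead_def trail_def b_word_V reduced_word_V)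

lemma trail_Not: "trail a (\<not> e) = finv (lead a e)"
  by (simp add: lead_def trail_def)

text \<open>Between consecutive \<open>A\<close>-letters \<open>(G c, f)\<close> and \<open>(G a, e)\<close> of a reduced word,
  separated by the \<open>b\<close>-word \<open>s\<close>, the image has \<open>trail c f @ s @ lead a e\<close>. When the two
  letters are mutually inverse this is a conjugate of \<open>s \<noteq> []\<close>, so they never cancel.\<close>

lemma reduced_word_image_segment:
  assumes "reduced_word (Q @ [(G c, f)])" "reduced_word (z @ [(G c, f)] @ s @ [(G a, e)])"
    and "b_word s"
  shows "reduced_word ((Q @ [(G c, f)]) @ freduce (trail c f @ s @ lead a e) @ [(G a, e)])"
proof (rule reduced_word_snoc_A_letter)
  have "reduced_word s"
    using assms(2) reduced_word_appendD[of "z @ [(G c, f)]" "s @ [(G a, e)]"]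
      reduced_word_appendD(1)[of s] by simp
  show "reduced_word ((Q @ [(G c, f)]) @ freduce (trail c f @ s @ lead a e))"
    using reduced_word_A_letter_b_word[OF assms(1) reduced_word_freduce]
    by (simp add: b_word_freduce b_word_trail b_word_lead assms(3))
  show "b_word (freduce (trail c f @ s @ lead a e))"
    by (simp add: b_word_freduce b_word_trail b_word_lead assms(3))
  assume "freduce (trail c f @ s @ lead a e) = []"
  show "Q @ [(G c, f)] = [] \<or> last (Q @ [(G c, f)]) \<noteq> (G a, \<not> e)"
  proof (rule disjI2, rule notI)
    assume "last (Q @ [(G c, f)]) = (G a, \<not> e)"
    then have "freduce (finv (lead a e) @ s @ lead a e) = []"
      using \<open>freduce (trail c f @ s @ lead a e) = []\<close> by (simp add: trail_Not)
    then have "s = []"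
      using freduce_conj_eq_Nil freduce_reduced_word[OF \<open>reduced_word s\<close>] by metis
    then show False
      using assms(2) \<open>last (Q @ [(G c, f)]) = (G a, \<not> e)\<close> by (simp add: reduced_word_append)
  qed
qed

lemma hom_ext_snoc_A_letter_eq:
  assumes hom_z: "hom_ext img z = Q @ M"
    and reduced: "reduced_word (Q @ freduce (M @ lead a e) @ [(G a, e)])"
  shows "hom_ext img (z @ [(G a, e)]) = (Q @ freduce (M @ lead a e)) @ [(G a, e)] @ trail a e"
proof -
  have "hom_ext img (z @ [(G a, e)]) = freduce (Q @ M @ lead a e @ [(G a, e)] @ trail a e)"
    using freduce_append_freduce_right[of "Q @ M" "lead a e @ [(G a, e)] @ trail a e"]
    by (simp add: hom_ext_append hom_z hom_ext_singleton hom_letter_A_letter)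
  also have "\<dots> = freduce ((Q @ freduce (M @ lead a e) @ [(G a, e)]) @ trail a e)"
    by (metis append_assoc freduce_append_freduce_middle)
  also have "\<dots> = (Q @ freduce (M @ lead a e)) @ [(G a, e)] @ trail a e"
  proof -
    have "reduced_word ((Q @ freduce (M @ lead a e)) @ [(G a, e)] @ trail a e)"
      using reduced reduced_word_A_letter_b_word[of "Q @ freduce (M @ lead a e)" a e "trail a e"]
      by (simp add: reduced_word_trail b_word_trail)
    then show ?thesis
      by (metis append_assoc freduce_reduced_word)
  qed
  finally show ?thesis .
qed

lemma hom_ext_snoc_A_letter:
  "reduced_word (z @ [(G a, e)]) \<Longrightarrow>
     \<exists>Q. hom_ext img (z @ [(G a, e)]) = Q @ [(G a, e)] @ trail a e \<and> reduced_word (Q @ [(G a, e)])"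
proof (induction "length z" arbitrary: z a e rule: less_induct)
  case less
  obtain Q M where hom_z: "hom_ext img z = Q @ M"
    and reduced: "reduced_word (Q @ freduce (M @ lead a e) @ [(G a, e)])"
  proof (cases "b_word z")
    case True
    have "reduced_word (freduce (z @ lead a e) @ [(G a, e)])"
      using reduced_word_snoc_A_letter[of "[]" "freduce (z @ lead a e)"] True
      by (simp add: reduced_word_freduce b_word_freduce b_word_lead)
    moreover have "reduced_word z"
      using less.prems reduced_word_appendD by blast
    ultimately show ?thesis
      using that[of "[]" z] True by (simp add: hom_ext_b_word freduce_reduced_word)
  next
    case False
    then obtain z1 c f s where z: "z = z1 @ [(G c, f)] @ s" and s: "b_word s"
      using b_word_or_last_A_letter by blast
    have "reduced_word ((z1 @ [(G c, f)]) @ s)"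
      using less.prems z reduced_word_appendD(1)[of z] by simp
    then have rz1: "reduced_word (z1 @ [(G c, f)])" and rs: "reduced_word s"
      using reduced_word_appendD[of "z1 @ [(G c, f)]" s] by simp_all
    from less.hyps[OF _ rz1] z obtain Q1 where
      Q1: "hom_ext img (z1 @ [(G c, f)]) = Q1 @ [(G c, f)] @ trail c f"
        "reduced_word (Q1 @ [(G c, f)])" by auto
    define M where "M = freduce (trail c f @ s)"
    have "hom_ext img z = freduce (hom_ext img (z1 @ [(G c, f)]) @ hom_ext img s)"
      unfolding z by (metis append_assoc hom_ext_append)
    also have "\<dots> = (Q1 @ [(G c, f)]) @ M"
      using freduce_A_letter_b_word[OF Q1(2), of "trail c f @ s"]
      by (simp add: Q1(1) hom_ext_b_word s b_word_trail M_def freduce_reduced_word[OF rs])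
    finally have hom_z: "hom_ext img z = (Q1 @ [(G c, f)]) @ M" .
    have "reduced_word ((Q1 @ [(G c, f)]) @ freduce (M @ lead a e) @ [(G a, e)])"
      using reduced_word_image_segment[OF Q1(2) _ s] less.prems z by (simp add: M_def)
    then show ?thesis
      using that hom_z by blast
  qed
  then show ?case
    using hom_ext_snoc_A_letter_eq[OF hom_z] by auto
qed

lemma hom_ext_last_A_letter:
  assumes "reduced_word (z @ [(G a, e)] @ s)" "b_word s"
  shows "\<exists>Q. hom_ext img (z @ [(G a, e)] @ s) = Q @ [(G a, e)] @ freduce (trail a e @ s)
           \<and> reduced_word (Q @ [(G a, e)])"
proof -
  have "reduced_word ((z @ [(G a, e)]) @ s)"
    using assms(1) by simp
  then have "reduced_word (z @ [(G a, e)])" and rs: "reduced_word s"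
    by (blast dest: reduced_word_appendD)+
  then obtain Q where Q: "hom_ext img (z @ [(G a, e)]) = Q @ [(G a, e)] @ trail a e"
    "reduced_word (Q @ [(G a, e)])"
    using hom_ext_snoc_A_letter by blast
  have "hom_ext img (z @ [(G a, e)] @ s) = Q @ [(G a, e)] @ freduce (trail a e @ s)"
    using hom_ext_append[of img "z @ [(G a, e)]" s] freduce_A_letter_b_word[OF Q(2), of "trail a e @ s"]
    by (simp add: Q(1) hom_ext_b_word assms(2) b_word_trail freduce_reduced_word[OF rs])
  then show ?thesis
    using Q(2) by blast
qed

end

section \<open>The words \<open>v(y,a)\<close>\<close>

definition vw :: "nat \<Rightarrow> nat \<Rightarrow> 'a word" where
  "vw k m = replicate k (B1, False) @ concat (replicate m [(B2, False), (B1, False)])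
     @ replicate k (B2, False)"

definition vw_head :: "nat \<Rightarrow> 'a word" where
  "vw_head k = replicate k (B1, False) @ [(B2, False)]"

definition vw_inv_head :: "nat \<Rightarrow> 'a word" where
  "vw_inv_head k = replicate k (B2, True) @ [(B1, True)]"

lemma concat_replicate_append_comm: "concat (replicate m xs) @ xs = xs @ concat (replicate m xs)"
  by (induction m) auto

lemma finv_concat_replicate: "finv (concat (replicate m xs)) = concat (replicate m (finv xs))"
  by (induction m) (simp_all add: concat_replicate_append_comm)

lemma set_concat_replicate: "set (concat (replicate m xs)) = (if m = 0 then {} else set xs)"
  by (induction m) auto

lemma reduced_word_same_sign: "\<forall>x \<in> set w. snd x = e \<Longrightarrow> reduced_word w"
  by (induction w rule: induct_list012) (auto simp: inv_letter_def)

lemma positive_vw: "x \<in> set (vw k m) \<Longrightarrow> \<not> snd x"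
  by (auto simp: vw_def set_concat_replicate split: if_splits)

lemma reduced_word_vw: "reduced_word (vw k m)"
  using positive_vw by (blast intro: reduced_word_same_sign)

lemma b_word_vw: "b_word (vw k m)"
  by (auto simp: vw_def b_word_def set_concat_replicate)

lemma vw_head_prefix:
  "m \<ge> 1 \<Longrightarrow> \<exists>R. replicate k (B1, False) @ concat (replicate m [(B2, False), (B1, False)]) @ Y
     = vw_head k @ R"
  by (cases m) (auto simp: vw_head_def)

lemma freduce_cancel_reduced:
  "reduced_word (xs @ ys) \<Longrightarrow> freduce (xs @ ws @ finv ws @ ys) = xs @ ys"
  by (simp add: freduce_reduced_word)

lemma freduce_vw_vw_head:
  assumes "m \<ge> 1" "reduced_word (vw_head k' @ Z)"
  shows "\<exists>Z'. freduce (vw k m @ vw_head k' @ Z) = vw_head k @ Z'"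
proof -
  have "vw k m \<noteq> []"
    using assms(1) by (cases m) (auto simp: vw_def)
  then have "\<not> snd (last (vw k m))"
    using positive_vw last_in_set by blast
  moreover have "\<not> snd (hd (vw_head k' @ Z))"
    by (cases k') (auto simp: vw_head_def)
  ultimately have "hd (vw_head k' @ Z) \<noteq> inv_letter (last (vw k m))"
    by (auto simp: inv_letter_def)
  then have "reduced_word (vw k m @ vw_head k' @ Z)"
    using assms(2) reduced_word_vw by (simp add: reduced_word_append)
  then show ?thesis
    using vw_head_prefix[OF assms(1)] by (fastforce simp: freduce_reduced_word vw_def)
qed

lemma reduced_word_positive_append:
  assumes "reduced_word X" "X \<noteq> []" "\<forall>x \<in> set X. \<not> snd x" "reduced_word R"
    and "R \<noteq> [] \<Longrightarrow> hd R \<noteq> (fst (last X), True)"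
  shows "reduced_word (X @ R)"
  using assms by (cases R) (auto simp: reduced_word_append inv_letter_def)

lemma freduce_vw_vw_inv_head_less:
  assumes "k' < k" "m \<ge> 1" "reduced_word (vw_inv_head k' @ Z)"
  shows "\<exists>Z'. freduce (vw k m @ vw_inv_head k' @ Z) = vw_head k @ Z'"
proof -
  define X :: "'a word" where "X = replicate k (B1, False)
    @ concat (replicate m [(B2, False), (B1, False)]) @ replicate (k - k') (B2, False)"
  have "vw k m = X @ replicate k' (B2, False)"
    using assms(1) by (simp add: vw_def X_def flip: replicate_add)
  then have split: "vw k m @ vw_inv_head k' @ Z
      = X @ replicate k' (B2, False) @ finv (replicate k' (B2, False)) @ (B1, True) # Z"
    by (simp add: vw_inv_head_def finv_replicate)
  have reduced: "reduced_word (X @ (B1, True) # Z)"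
  proof (rule reduced_word_positive_append)
    show "reduced_word ((B1, True) # Z)"
      using assms(3) by (simp add: vw_inv_head_def reduced_word_append)
    show "X \<noteq> []" "\<forall>x \<in> set X. \<not> snd x"
      using assms(1) by (auto simp: X_def set_concat_replicate)
    then show "reduced_word X"
      by (blast intro: reduced_word_same_sign)
    show "hd ((B1, True) # Z) \<noteq> (fst (last X), True)"
      using assms(1) by (simp add: X_def)
  qed
  obtain R where "X = vw_head k @ R"
    using vw_head_prefix[OF assms(2)] unfolding X_def by blast
  then show ?thesis
    unfolding split freduce_cancel_reduced[OF reduced] by auto
qed

lemma freduce_vw_vw_inv_head_greater:
  assumes "k < k'" "m \<ge> 1" "reduced_word (vw_inv_head k' @ Z)"
  shows "\<exists>Z'. freduce (vw k m @ vw_inv_head k' @ Z) = vw_head k @ Z'"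
proof -
  define X :: "'a word" where
    "X = replicate k (B1, False) @ concat (replicate m [(B2, False), (B1, False)])"
  have "vw_inv_head k' = replicate k (B2, True) @ replicate (k' - k) (B2, True) @ [(B1, True)]"
    using assms(1) by (simp add: vw_inv_head_def flip: replicate_add)
  then have split: "vw k m @ vw_inv_head k' @ Z = X @ replicate k (B2, False)
      @ finv (replicate k (B2, False)) @ replicate (k' - k) (B2, True) @ (B1, True) # Z"
    by (simp add: vw_def X_def finv_replicate)
  have reduced: "reduced_word (X @ replicate (k' - k) (B2, True) @ (B1, True) # Z)"
  proof (rule reduced_word_positive_append)
    show "reduced_word (replicate (k' - k) (B2, True) @ (B1, True) # Z)"
      using assms(3) reduced_word_appendD(2)[of "replicate k (B2, True)"]
      by (simp add: \<open>vw_inv_head k' = _\<close>)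
    show "X \<noteq> []" "\<forall>x \<in> set X. \<not> snd x"
      using assms(2) by (auto simp: X_def set_concat_replicate)
    then show "reduced_word X"
      by (blast intro: reduced_word_same_sign)
    have "last X = (B1, False)"
      using assms(2) by (cases m) (simp_all add: X_def concat_replicate_append_comm[symmetric])
    then show "hd (replicate (k' - k) (B2, True) @ (B1, True) # Z) \<noteq> (fst (last X), True)"
      using assms(1) by simp
  qed
  obtain R where "X = vw_head k @ R"
    using vw_head_prefix[OF assms(2), of k "[]"] unfolding X_def by auto
  then show ?thesis
    unfolding split freduce_cancel_reduced[OF reduced] by auto
qed

lemma freduce_vw_vw_inv_head:
  "k \<noteq> k' \<Longrightarrow> m \<ge> 1 \<Longrightarrow> reduced_word (vw_inv_head k' @ Z) \<Longrightarrow>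
     \<exists>Z'. freduce (vw k m @ vw_inv_head k' @ Z) = vw_head k @ Z'"
  by (metis freduce_vw_vw_inv_head_less freduce_vw_vw_inv_head_greater linorder_neqE_nat)

fun bswap :: "'a letter \<Rightarrow> 'a letter" where
  "bswap (B1, e) = (B2, \<not> e)"
| "bswap (B2, e) = (B1, \<not> e)"
| "bswap (G a, e) = (G a, e)"

lemma bswap_bswap [simp]: "bswap (bswap x) = x"
  and bswap_inv_letter: "bswap (inv_letter x) = inv_letter (bswap x)"
  by (cases x rule: bswap.cases; simp)+

lemma bswap_comp_bswap [simp]: "bswap \<circ> bswap = id"
  by (simp add: fun_eq_iff)

lemma bswap_eq_iff [simp]: "bswap x = bswap y \<longleftrightarrow> x = y"
  by (metis bswap_bswap)

lemma freduce_map_bswap: "freduce (map bswap w) = map bswap (freduce w)"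
  by (induction w) (auto split: list.split simp flip: bswap_inv_letter)

lemma reduced_word_iff_freduce: "reduced_word w \<longleftrightarrow> freduce w = w"
  by (metis freduce_reduced_word reduced_word_freduce)

lemma reduced_word_map_bswap [simp]: "reduced_word (map bswap w) = reduced_word w"
  by (simp add: reduced_word_iff_freduce freduce_map_bswap inj_def)

lemma finv_vw_eq_map_bswap: "finv (vw k m) = map bswap (vw k m)"
  by (simp add: vw_def finv_replicate finv_concat_replicate map_concat)

lemma map_bswap_vw_head: "map bswap (vw_head k) = vw_inv_head k"
  by (simp add: vw_head_def vw_inv_head_def)

section \<open>The rules \<open>\<theta>\<^sub>y\<close>\<close>

lemma vword_eq:
  fixes eta :: "'a::finite gen \<times> 'a \<Rightarrow> nat"
  shows "vword eta y a = vw (eta (y, a)) (D_const TYPE('a) - 2 * eta (y, a))"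
  by (simp add: vword_def vw_def Let_def)

lemma reduced_word_vword: "reduced_word (vword eta y a)"
  and b_word_vword: "b_word (vword eta y a)"
  by (simp_all add: vword_eq reduced_word_vw b_word_vw)

text \<open>\<open>phi eta a\<close> is the homomorphism \<open>b\<^sub>i \<mapsto> v(b\<^sub>i,a)\<^sup>-\<^sup>1\<close>; \<open>phi_head eta a x\<close> is the
  prefix of \<open>phi_letter eta a x\<close> that survives free reduction of \<open>phi eta a (x # g)\<close>.\<close>

definition phi_letter :: "('a::finite gen \<times> 'a \<Rightarrow> nat) \<Rightarrow> 'a \<Rightarrow> 'a letter \<Rightarrow> 'a word" where
  "phi_letter eta a x = (if snd x then vword eta (fst x) a else finv (vword eta (fst x) a))"

definition phi :: "('a::finite gen \<times> 'a \<Rightarrow> nat) \<Rightarrow> 'a \<Rightarrow> 'a word \<Rightarrow> 'a word" where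
  "phi eta a g = concat (map (phi_letter eta a) g)"

definition phi_head :: "('a::finite gen \<times> 'a \<Rightarrow> nat) \<Rightarrow> 'a \<Rightarrow> 'a letter \<Rightarrow> 'a word" where
  "phi_head eta a x = (if snd x then vw_head (eta (fst x, a)) else vw_inv_head (eta (fst x, a)))"

lemma phi_Nil [simp]: "phi eta a [] = []"
  and phi_Cons: "phi eta a (x # g) = phi_letter eta a x @ phi eta a g"
  and phi_snoc: "phi eta a (g @ [x]) = phi eta a g @ phi_letter eta a x"
  by (simp_all add: phi_def)

lemma phi_letter_inv_letter: "phi_letter eta a (inv_letter x) = map bswap (phi_letter eta a x)"
  and phi_head_inv_letter: "phi_head eta a (inv_letter x) = map bswap (phi_head eta a x)"
  by (simp_all add: phi_letter_def phi_head_def vword_eq finv_vw_eq_map_bswap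
      flip: map_bswap_vw_head)

lemma reduced_word_phi_letter: "reduced_word (phi_letter eta a x)"
  by (simp add: phi_letter_def reduced_word_vword)

lemma b_word_phi: "b_word (phi eta a g)"
  by (induction g) (simp_all add: phi_Cons phi_letter_def b_word_vword)

lemma inverse_letter_wlog:
  assumes "\<And>x. snd x \<Longrightarrow> P x" "\<And>x. P (inv_letter x) \<Longrightarrow> P x"
  shows "P x"
  using assms by (cases "snd x") (auto simp: inv_letter_def)

lemma apply_rule_True: "apply_rule eta x (y, True) = freduce (psi eta y x @ [(y, True)])"
  and apply_rule_False: "apply_rule eta x (y, False) = psi_inv eta y (freduce (x @ [(y, False)]))"
  by (simp_all add: apply_rule_def fmult_def u_word_def finv_def)

lemma run_Nil [simp]: "run eta x [] = x"
  and run_Cons [simp]: "run eta x (r # h) = run eta (apply_rule eta x r) h"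
  by (simp_all add: run_def)

lemma psi_b_word: "b_word x \<Longrightarrow> psi eta y x = freduce x"
  and psi_inv_b_word: "b_word x \<Longrightarrow> psi_inv eta y x = freduce x"
  by (simp_all add: psi_def psi_inv_def hom_ext_b_word)

lemma psi_last_A_letter:
  assumes "reduced_word (z @ [(G a, e)] @ s)" "b_word s"
  shows "\<exists>Q. psi eta y (z @ [(G a, e)] @ s)
      = Q @ [(G a, e)] @ freduce ((if e then finv (vword eta y a) else []) @ s)
      \<and> reduced_word (Q @ [(G a, e)])"
proof -
  interpret b_fixing_hom "\<lambda>a. vword eta y a @ [(G a, False)]" "\<lambda>a. vword eta y a"
    by unfold_locales (simp_all add: b_word_vword reduced_word_vword)
  show ?thesis
    using hom_ext_last_A_letter[OF assms] by (simp add: psi_def trail_def)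
qed

lemma psi_inv_last_A_letter:
  assumes "reduced_word (z @ [(G a, e)] @ s)" "b_word s"
  shows "\<exists>Q. psi_inv eta y (z @ [(G a, e)] @ s)
      = Q @ [(G a, e)] @ freduce ((if e then vword eta y a else []) @ s)
      \<and> reduced_word (Q @ [(G a, e)])"
proof -
  interpret b_fixing_hom "\<lambda>a. finv (vword eta y a) @ [(G a, False)]" "\<lambda>a. finv (vword eta y a)"
    by unfold_locales (simp_all add: b_word_vword reduced_word_vword)
  show ?thesis
    using hom_ext_last_A_letter[OF assms] by (cases e) (simp_all add: psi_inv_def trail_def)
qed

lemma apply_rule_b_letter:
  assumes "reduced_word (z @ [(G a, e)] @ s)" "b_word s" "fst r \<in> {B1, B2}"
  shows "\<exists>Q. apply_rule eta (z @ [(G a, e)] @ s) r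
      = Q @ [(G a, e)] @ freduce ((if e then finv (phi_letter eta a r) else []) @ s @ [r])
      \<and> reduced_word (Q @ [(G a, e)])"
proof -
  obtain y \<epsilon> where r: "r = (y, \<epsilon>)"
    by fastforce
  have b_word_r: "b_word [r]"
    using assms(3) by simp
  show ?thesis
  proof (cases \<epsilon>)
    case True
    obtain Q where Q: "psi eta y (z @ [(G a, e)] @ s)
        = Q @ [(G a, e)] @ freduce ((if e then finv (vword eta y a) else []) @ s)"
      "reduced_word (Q @ [(G a, e)])"
      using psi_last_A_letter[OF assms(1,2)] by blast
    have "apply_rule eta (z @ [(G a, e)] @ s) r
        = freduce (Q @ [(G a, e)] @ (if e then finv (vword eta y a) else []) @ s @ [r])"
      using True r Q(1) by (simp add: apply_rule_True)
    also have "\<dots> = Q @ [(G a, e)] @ freduce ((if e then finv (phi_letter eta a r) else []) @ s @ [r])"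
      using freduce_A_letter_b_word[OF Q(2)] assms(2) b_word_r True r
      by (simp add: phi_letter_def b_word_vword)
    finally show ?thesis
      using Q(2) by blast
  next
    case False
    have rz: "reduced_word (z @ [(G a, e)])"
      using assms(1) reduced_word_appendD(1)[of "z @ [(G a, e)]"] by simp
    have bsr: "b_word (s @ [r])"
      using assms(2) b_word_r by simp
    have "reduced_word (z @ [(G a, e)] @ freduce (s @ [r]))"
      using reduced_word_A_letter_b_word[OF rz reduced_word_freduce b_word_freduce[OF bsr]] .
    then obtain Q where Q: "psi_inv eta y (z @ [(G a, e)] @ freduce (s @ [r]))
        = Q @ [(G a, e)] @ freduce ((if e then vword eta y a else []) @ freduce (s @ [r]))"
      "reduced_word (Q @ [(G a, e)])"
      using psi_inv_last_A_letter[OF _ b_word_freduce[OF bsr]] by blast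
    then show ?thesis
      using False r freduce_A_letter_b_word[OF rz bsr]
      by (auto simp: apply_rule_False phi_letter_def)
  qed
qed

lemma apply_rule_A_letter:
  assumes "reduced_word (z @ [(G a, e)] @ s)" "b_word s" "s = [] \<Longrightarrow> (a, e) \<noteq> (c, False)"
  shows "\<exists>Q. apply_rule eta (z @ [(G a, e)] @ s) (G c, True) = Q @ [(G c, True)]
      \<and> reduced_word (Q @ [(G c, True)])"
proof -
  define M where "M = freduce ((if e then finv (vword eta (G c) a) else []) @ s)"
  obtain Q where Q: "psi eta (G c) (z @ [(G a, e)] @ s) = Q @ [(G a, e)] @ M"
    "reduced_word (Q @ [(G a, e)])"
    using psi_last_A_letter[OF assms(1,2)] unfolding M_def by blast
  have "b_word M"
    by (simp add: M_def b_word_freduce b_word_vword assms(2))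
  moreover have "M = [] \<Longrightarrow> (a, e) \<noteq> (c, False)"
    using assms freduce_reduced_word[of s] reduced_word_appendD(2)[of "z @ [(G a, e)]" s]
    by (cases e) (auto simp: M_def)
  moreover have "reduced_word M"
    unfolding M_def by (rule reduced_word_freduce)
  then have "reduced_word ((Q @ [(G a, e)]) @ M)"
    using reduced_word_A_letter_b_word[OF Q(2) _ \<open>b_word M\<close>] by simp
  ultimately have "reduced_word ((Q @ [(G a, e)]) @ M @ [(G c, True)])"
    by (intro reduced_word_snoc_A_letter) auto
  then have "apply_rule eta (z @ [(G a, e)] @ s) (G c, True) = (Q @ [(G a, e)] @ M) @ [(G c, True)]"
    using Q(1) by (simp add: apply_rule_True freduce_reduced_word)
  then show ?thesis
    using \<open>reduced_word ((Q @ [(G a, e)]) @ M @ [(G c, True)])\<close> by auto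
qed

lemma apply_rule_b_word_A_letter:
  assumes "reduced_word x" "b_word x"
  shows "apply_rule eta x (G c, True) = x @ [(G c, True)]"
    and "reduced_word (x @ [(G c, True)])"
proof -
  show "reduced_word (x @ [(G c, True)])"
    using assms reduced_word_snoc_A_letter[of "[]" x c True] by simp
  then show "apply_rule eta x (G c, True) = x @ [(G c, True)]"
    using assms by (simp add: apply_rule_True psi_b_word freduce_reduced_word)
qed

lemma apply_rule_inv_A_letter:
  assumes "reduced_word (x @ [(G c, False)])"
  shows "\<exists>Q. apply_rule eta x (G c, False) = Q @ [(G c, False)] \<and> reduced_word (Q @ [(G c, False)])"
  using psi_inv_last_A_letter[of x c False "[]"] assms
  by (simp add: apply_rule_False freduce_reduced_word)

lemma apply_rule_b_word_b_letter:
  "b_word (x @ [r]) \<Longrightarrow> apply_rule eta x r = freduce (x @ [r])"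
  by (cases r; cases "snd r") (simp_all add: apply_rule_True apply_rule_False psi_b_word psi_inv_b_word
      b_word_freduce)

lemma apply_rule_cancel_last:
  assumes "reduced_word (p @ [l])" "b_word (p @ [l])"
  shows "apply_rule eta (p @ [l]) (inv_letter l) = p"
proof -
  have "freduce (p @ [l] @ [inv_letter l]) = p"
    using freduce_cancel_finv(1)[of p "[l]" "[]"] assms(1)
    by (simp add: freduce_reduced_word reduced_word_snoc)
  then show ?thesis
    using assms(2) by (simp add: apply_rule_b_word_b_letter)
qed

lemma run_finv: "reduced_word p \<Longrightarrow> b_word p \<Longrightarrow> run eta p (finv p) = []"
proof (induction p rule: rev_induct)
  case (snoc l p)
  then show ?case
    by (simp add: run_def apply_rule_cancel_last reduced_word_snoc)
qed simp

lemma letter_cases: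
  obtains (b_rule) "fst r \<in> {B1, B2}" | (A_rule) c where "r = (G c, True)"
    | (inv_A_rule) c where "r = (G c, False)"
  by (metis (full_types) gen.exhaust insertCI prod.collapse)

definition last_A_positive :: "'a word \<Rightarrow> bool" where
  "last_A_positive x \<longleftrightarrow> b_word x \<or> (\<exists>z a s. x = z @ [(G a, False)] @ s \<and> b_word s)"

locale theta_rules =
  fixes eta :: "'a::finite gen \<times> 'a \<Rightarrow> nat"
  assumes eta_bij: "bij_betw eta UNIV {1 .. D_const TYPE('a) div 4}"
begin

lemma eta_ge_1: "eta p \<ge> 1"
  and D_minus_eta_ge_1: "D_const TYPE('a) - 2 * eta p \<ge> 1"
  using bij_betw_apply[OF eta_bij, of p] by auto

lemma eta_inj: "p \<noteq> q \<Longrightarrow> eta p \<noteq> eta q"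
  using bij_betw_imp_inj_on[OF eta_bij] by (auto dest: injD)

lemma phi_letter_prefix: "\<exists>R. phi_letter eta a x = phi_head eta a x @ R"
proof (induction x rule: inverse_letter_wlog)
  case (1 x)
  then show ?case
    using vw_head_prefix[OF D_minus_eta_ge_1]
    by (simp add: phi_letter_def phi_head_def vword_eq vw_def)
next
  case (2 x)
  then obtain R where R: "phi_letter eta a (inv_letter x) = phi_head eta a (inv_letter x) @ R" ..
  have "phi_letter eta a x = map bswap (phi_letter eta a (inv_letter x))"
    by (simp add: phi_letter_inv_letter)
  also have "\<dots> = phi_head eta a x @ map bswap R"
    by (simp add: R phi_head_inv_letter)
  finally show ?case ..
qed

lemma freduce_phi_letter_phi_head:
  assumes "x' \<noteq> inv_letter x" "reduced_word (phi_head eta a x' @ Z)"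
  shows "\<exists>Z'. freduce (phi_letter eta a x @ phi_head eta a x' @ Z) = phi_head eta a x @ Z'"
  using assms
proof (induction x arbitrary: x' Z rule: inverse_letter_wlog)
  case (1 x)
  show ?case
  proof (cases "snd x'")
    case True
    then show ?thesis
      using 1 freduce_vw_vw_head[OF D_minus_eta_ge_1] by (simp add: phi_letter_def phi_head_def vword_eq)
  next
    case False
    with 1 have "fst x' \<noteq> fst x"
      by (auto simp: inv_letter_def prod_eq_iff)
    then have "eta (fst x, a) \<noteq> eta (fst x', a)"
      using eta_inj by simp
    then show ?thesis
      using 1 False freduce_vw_vw_inv_head[OF _ D_minus_eta_ge_1]
      by (simp add: phi_letter_def phi_head_def vword_eq)
  qed
next
  case (2 x)
  have "inv_letter x' \<noteq> inv_letter (inv_letter x)"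
    using "2.prems"(1) by (simp add: inv_letter_eq_iff)
  moreover have "reduced_word (phi_head eta a (inv_letter x') @ map bswap Z)"
    using "2.prems"(2) by (simp add: phi_head_inv_letter flip: map_append)
  ultimately obtain Z' where "freduce (phi_letter eta a (inv_letter x) @ phi_head eta a (inv_letter x')
      @ map bswap Z) = phi_head eta a (inv_letter x) @ Z'"
    using "2.IH" by blast
  then have "freduce (map bswap (phi_letter eta a x @ phi_head eta a x' @ Z))
      = map bswap (phi_head eta a x @ map bswap Z')"
    by (simp add: phi_letter_inv_letter phi_head_inv_letter)
  then have "map bswap (freduce (phi_letter eta a x @ phi_head eta a x' @ Z))
      = map bswap (phi_head eta a x @ map bswap Z')"
    by (simp only: freduce_map_bswap)
  then show ?case
    by (metis bswap_eq_iff inj_def inj_map_eq_map)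
qed

lemma freduce_phi_prefix:
  "reduced_word g \<Longrightarrow> g \<noteq> [] \<Longrightarrow> \<exists>Z. freduce (phi eta a g) = phi_head eta a (hd g) @ Z"
proof (induction g)
  case (Cons x g)
  show ?case
  proof (cases g)
    case Nil
    then show ?thesis
      using phi_letter_prefix[of a x]
      by (auto simp: phi_Cons freduce_reduced_word reduced_word_phi_letter)
  next
    case (Cons x' g')
    with "Cons.prems" have "x' \<noteq> inv_letter x" "reduced_word g"
      by (auto simp: inv_letter_eq_iff)
    with "Cons.IH" Cons obtain Z where Z: "freduce (phi eta a g) = phi_head eta a x' @ Z"
      by auto
    have "freduce (phi eta a (x # g)) = freduce (phi_letter eta a x @ phi_head eta a x' @ Z)"
      by (simp add: phi_Cons flip: Z)
    then show ?thesis
      using freduce_phi_letter_phi_head[OF \<open>x' \<noteq> inv_letter x\<close>] reduced_word_freduce[of "phi eta a g"] Z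
      by auto
  qed
qed simp

text \<open>The first letter of \<open>phi eta a g\<close> in reduced form has the opposite sign to the first
  letter of \<open>g\<close>, so \<open>phi eta a g \<noteq> g\<close>.\<close>

lemma freduce_finv_phi_ne_Nil:
  assumes "reduced_word g" "b_word g" "g \<noteq> []"
  shows "freduce (finv (phi eta a g) @ g) \<noteq> []"
proof -
  define F where "F = freduce (phi eta a g)"
  obtain Z where Z: "F = phi_head eta a (hd g) @ Z"
    using freduce_phi_prefix[OF assms(1,3)] unfolding F_def by blast
  have "snd (hd F) \<noteq> snd (hd g)"
    using eta_ge_1[of "(fst (hd g), a)"]
    by (cases "eta (fst (hd g), a)") (auto simp: Z phi_head_def vw_head_def vw_inv_head_def)
  moreover have "F \<noteq> []"
    by (simp add: Z phi_head_def vw_head_def vw_inv_head_def)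
  then have "last (finv F) = inv_letter (hd F)"
    by (cases F) auto
  ultimately have "reduced_word (finv F @ g)"
    using assms(1) reduced_word_freduce[of "phi eta a g"]
    by (auto simp: reduced_word_append F_def)
  have "freduce (finv (phi eta a g) @ g) = freduce (finv F @ g)"
    by (simp only: F_def freduce_finv_freduce)
  also have "\<dots> = finv F @ g"
    by (rule freduce_reduced_word) fact
  finally have "freduce (finv (phi eta a g) @ g) = finv F @ g" .
  then show ?thesis
    using assms(3) by simp
qed

text \<open>In the second case \<open>g\<close> lists the \<open>b\<close>-rules applied since the letter \<open>(G a, True)\<close>
  was created: each rule \<open>r\<close> multiplies the tail after it by \<open>finv (phi_letter eta a r)\<close> on
  the left and by the letter \<open>r\<close> on the right.\<close>

definition escaped :: "'a word \<Rightarrow> 'a letter \<Rightarrow> bool" where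
  "escaped x r \<longleftrightarrow>
     (reduced_word x \<and> x \<noteq> [] \<and> last x = r \<and> last_A_positive x)
   \<or> (\<exists>z a g. x = z @ [(G a, True)] @ freduce (finv (phi eta a g) @ g)
        \<and> reduced_word (z @ [(G a, True)]) \<and> reduced_word g \<and> b_word g
        \<and> last ((G a, True) # g) = r)"

lemma escaped_ne_Nil: "escaped x r \<Longrightarrow> x \<noteq> []"
  by (auto simp: escaped_def)

lemma escaped_b_word: "reduced_word x \<Longrightarrow> b_word x \<Longrightarrow> x \<noteq> [] \<Longrightarrow> escaped x (last x)"
  by (simp add: escaped_def last_A_positive_def)

lemma escaped_positive:
  assumes "reduced_word (z @ [(G a, False)] @ s)" "b_word s"
  shows "escaped (z @ [(G a, False)] @ s) (last ((G a, False) # s))"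
proof -
  have "last (z @ [(G a, False)] @ s) = last ((G a, False) # s)"
    by (cases s rule: rev_cases) auto
  then show ?thesis
    using assms unfolding escaped_def last_A_positive_def by blast
qed

lemma escaped_negative:
  assumes "reduced_word (z @ [(G a, True)])" "reduced_word g" "b_word g"
  shows "escaped (z @ [(G a, True)] @ freduce (finv (phi eta a g) @ g)) (last ((G a, True) # g))"
  using assms unfolding escaped_def by blast

lemma escaped_A_inverse:
  "reduced_word (z @ [(G a, True)]) \<Longrightarrow> escaped (z @ [(G a, True)]) (G a, True)"
  using escaped_negative[of z a "[]"] by simp

lemma escaped_apply_inv_A_rule:
  assumes "reduced_word (x @ [(G c, False)])"
  shows "escaped (apply_rule eta x (G c, False)) (G c, False)"
proof -
  obtain Q where "apply_rule eta x (G c, False) = Q @ [(G c, False)]"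
    "reduced_word (Q @ [(G c, False)])"
    using apply_rule_inv_A_letter[OF assms] by blast
  then show ?thesis
    using escaped_positive[of Q c "[]"] by simp
qed

lemma escaped_apply_b_rule_fresh:
  assumes "reduced_word (x @ [r])" "last_A_positive x" "fst r \<in> {B1, B2}"
  shows "escaped (apply_rule eta x r) r"
  using assms(2) unfolding last_A_positive_def
proof (elim disjE exE conjE)
  assume "b_word x"
  then have "apply_rule eta x r = x @ [r]"
    using apply_rule_b_word_b_letter[of x r eta] assms(3) freduce_reduced_word[OF assms(1)] by simp
  then show ?thesis
    using escaped_b_word[OF assms(1)] \<open>b_word x\<close> assms(3) by simp
next
  fix z a s
  assume x: "x = z @ [(G a, False)] @ s" and s: "b_word s"
  have "reduced_word (z @ [(G a, False)] @ s)"
    using assms(1) x reduced_word_appendD(1)[of x] by simp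
  then obtain Q where Q: "apply_rule eta x r = Q @ [(G a, False)] @ freduce (s @ [r])"
    "reduced_word (Q @ [(G a, False)])"
    using apply_rule_b_letter[of z a False s r eta] x s assms(3) by auto
  have "reduced_word (s @ [r])"
    using assms(1) x reduced_word_appendD(2)[of "z @ [(G a, False)]" "s @ [r]"] by simp
  moreover have "b_word (s @ [r])"
    using s assms(3) by simp
  ultimately show ?thesis
    using Q escaped_positive[of Q a "s @ [r]"] reduced_word_A_letter_b_word[OF Q(2)]
    by (simp add: freduce_reduced_word)
qed

lemma escaped_apply_A_rule_fresh:
  assumes "reduced_word (x @ [(G c, True)])" "last_A_positive x"
  shows "escaped (apply_rule eta x (G c, True)) (G c, True)"
  using assms(2) unfolding last_A_positive_def
proof (elim disjE exE conjE)
  assume "b_word x"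
  then show ?thesis
    using apply_rule_b_word_A_letter assms(1) reduced_word_appendD(1) escaped_A_inverse by metis
next
  fix z a s
  assume x: "x = z @ [(G a, False)] @ s" and s: "b_word s"
  have "reduced_word (z @ [(G a, False)] @ s)"
    using assms(1) x reduced_word_appendD(1)[of x] by simp
  moreover have "s = [] \<Longrightarrow> (a, False) \<noteq> (c, False)"
    using assms(1) x by (auto simp: reduced_word_append)
  ultimately obtain Q where "apply_rule eta x (G c, True) = Q @ [(G c, True)]"
    "reduced_word (Q @ [(G c, True)])"
    using apply_rule_A_letter[of z a False s c eta] x s by auto
  then show ?thesis
    using escaped_A_inverse by simp
qed

lemma escaped_apply_rule_fresh:
  "reduced_word (x @ [r]) \<Longrightarrow> last_A_positive x \<Longrightarrow> escaped (apply_rule eta x r) r"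
  by (cases r rule: letter_cases)
    (simp_all add: escaped_apply_b_rule_fresh escaped_apply_A_rule_fresh escaped_apply_inv_A_rule)

lemma escaped_negative_apply_b_rule:
  assumes "reduced_word (z @ [(G a, True)])" "reduced_word (g @ [r])" "b_word (g @ [r])"
  shows "escaped (apply_rule eta (z @ [(G a, True)] @ freduce (finv (phi eta a g) @ g)) r) r"
proof -
  define s where "s = freduce (finv (phi eta a g) @ g)"
  have "b_word s" "reduced_word (z @ [(G a, True)] @ s)"
    using assms reduced_word_A_letter_b_word[OF assms(1) reduced_word_freduce]
    by (simp_all add: s_def b_word_freduce b_word_phi)
  then obtain Q where Q: "apply_rule eta (z @ [(G a, True)] @ s) r
      = Q @ [(G a, True)] @ freduce (finv (phi_letter eta a r) @ s @ [r])"
    "reduced_word (Q @ [(G a, True)])"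
    using apply_rule_b_letter[of z a True s r eta] assms(3) by auto
  have "freduce (finv (phi_letter eta a r) @ s @ [r]) = freduce (finv (phi eta a (g @ [r])) @ g @ [r])"
    by (simp add: s_def phi_snoc)
  then show ?thesis
    using Q escaped_negative[OF Q(2) assms(2,3)] by (simp add: s_def)
qed

lemma escaped_negative_apply_rule:
  assumes "reduced_word (z @ [(G a, True)])" "reduced_word g" "b_word g"
    and "r \<noteq> inv_letter (last ((G a, True) # g))"
  shows "escaped (apply_rule eta (z @ [(G a, True)] @ freduce (finv (phi eta a g) @ g)) r) r"
proof -
  define s where "s = freduce (finv (phi eta a g) @ g)"
  have bs: "b_word s" and rx: "reduced_word (z @ [(G a, True)] @ s)"
    using reduced_word_A_letter_b_word[OF assms(1) reduced_word_freduce]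
    by (simp_all add: s_def b_word_freduce b_word_phi assms(3))
  show ?thesis
  proof (cases r rule: letter_cases)
    case b_rule
    have "reduced_word (g @ [r])"
      unfolding reduced_word_snoc using assms(2,4) by (auto simp: inv_letter_eq_iff)
    then show ?thesis
      using escaped_negative_apply_b_rule[OF assms(1)] assms(3) b_rule by simp
  next
    case (A_rule c)
    then obtain Q where "apply_rule eta (z @ [(G a, True)] @ s) r = Q @ [(G c, True)]"
      "reduced_word (Q @ [(G c, True)])"
      using apply_rule_A_letter[OF rx bs, of c eta] by auto
    then show ?thesis
      using escaped_A_inverse A_rule by (simp add: s_def)
  next
    case (inv_A_rule c)
    have "s = [] \<Longrightarrow> last (z @ [(G a, True)]) \<noteq> (G c, True)"
    proof -
      assume "s = []"
      then have "g = []"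
        using freduce_finv_phi_ne_Nil[OF assms(2,3)] s_def by metis
      then show ?thesis
        using assms(4) inv_A_rule by auto
    qed
    then have "reduced_word ((z @ [(G a, True)] @ s) @ [(G c, False)])"
      using reduced_word_snoc_A_letter[of "z @ [(G a, True)]" s c False] rx bs by auto
    then show ?thesis
      using escaped_apply_inv_A_rule inv_A_rule by (simp add: s_def)
  qed
qed

lemma escaped_apply_rule:
  assumes "escaped x r" "r' \<noteq> inv_letter r"
  shows "escaped (apply_rule eta x r') r'"
  using assms(1) unfolding escaped_def[of x r]
proof (elim disjE exE conjE)
  assume "reduced_word x" "x \<noteq> []" "last x = r" "last_A_positive x"
  moreover from this have "reduced_word (x @ [r'])"
    using assms(2) by (auto simp: reduced_word_snoc inv_letter_eq_iff)
  ultimately show ?thesis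
    using escaped_apply_rule_fresh by blast
next
  fix z a g
  assume "x = z @ [(G a, True)] @ freduce (finv (phi eta a g) @ g)"
    "reduced_word (z @ [(G a, True)])" "reduced_word g" "b_word g" "last ((G a, True) # g) = r"
  then show ?thesis
    using escaped_negative_apply_rule assms(2) by blast
qed

lemma run_escaped_ne_Nil: "escaped x r \<Longrightarrow> reduced_word (r # h) \<Longrightarrow> run eta x h \<noteq> []"
proof (induction h arbitrary: x r)
  case Nil
  then show ?case
    using escaped_ne_Nil by simp
next
  case (Cons r' h)
  then have "r' \<noteq> inv_letter r" "reduced_word (r' # h)"
    by auto
  then show ?case
    using Cons.IH[OF escaped_apply_rule[OF Cons.prems(1)]] by simp
qed

lemma run_eq_Nil_imp_finv:
  "reduced_word p \<Longrightarrow> b_word p \<Longrightarrow> reduced_word h \<Longrightarrow> run eta p h = [] \<Longrightarrow> h = finv p"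
proof (induction h arbitrary: p)
  case (Cons r h)
  show ?case
  proof (cases "p \<noteq> [] \<and> r = inv_letter (last p)")
    case True
    then obtain p' l where p: "p = p' @ [l]" and r: "r = inv_letter l"
      by (metis append_butlast_last_id)
    have "reduced_word p'" "b_word p'" "reduced_word h"
      using Cons.prems p by (auto simp: reduced_word_snoc reduced_word_Cons)
    moreover have "run eta p' h = []"
      using Cons.prems p r apply_rule_cancel_last[of p' l eta] by simp
    ultimately show ?thesis
      using Cons.IH p r by simp
  next
    case False
    then have "reduced_word (p @ [r])"
      using Cons.prems(1) by (auto simp: reduced_word_snoc inv_letter_eq_iff)
    moreover have "last_A_positive p"
      using Cons.prems(2) by (simp add: last_A_positive_def)
    ultimately have "escaped (apply_rule eta p r) r"
      by (rule escaped_apply_rule_fresh)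
    then show ?thesis
      using run_escaped_ne_Nil Cons.prems(3,4) by simp
  qed
qed simp

end

theorem lemma5p11:
  fixes eta :: "'a::finite gen \<times> 'a \<Rightarrow> nat"
    and w :: "'a word"
  assumes eta_bij: "bij_betw eta UNIV {1 .. D_const TYPE('a) div 4}"
    and w_FB: "in_FB w"
  shows "(\<exists>!h. reduced_history h \<and> run eta w h = [])
       \<and> (\<forall>h. reduced_history h \<and> run eta w h = [] \<longrightarrow> length h = length w)"
proof -
  interpret theta_rules eta
    by unfold_locales (fact eta_bij)
  have w: "reduced_word w" "b_word w"
    using w_FB by (simp_all add: in_FB_iff)
  have "reduced_history (finv w) \<and> run eta w (finv w) = []"
    using run_finv[OF w] w by (simp add: reduced_history_iff_reduced_word)
  moreover have "h = finv w" if "reduced_history h" "run eta w h = []" for h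
    using run_eq_Nil_imp_finv[OF w] that by (simp add: reduced_history_iff_reduced_word)
  ultimately show ?thesis
    by (metis length_finv)
qed

end
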